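(* Let $Q$ be a key polynomial for $\nu$ and let $f,q,r\in K[x]$ with $f=qQ+r$ and $\gamma:=\max\{\epsilon(f),\epsilon(r)\}<\epsilon(Q)$. Then \[ \nu_Q(qQ)-(\epsilon(Q)-\gamma)\ \ge\ \nu(f)=\nu(r). \]
   Context: Let $K$ be a field and $\nu$ a rank one valuation on $K[x]$ (values in $\mathbb{R}\cup\{\infty\}$). For $f\in K[x]$ and $b\ge 0$, $\partial_bf$ denotes the $b$-th Hasse derivative of $f$ (defined by $f(x+y)=\sum_b\partial_bf(x)y^b$). For nonconstant $f$ set $\epsilon(f)=\max_{1\le b\le\deg f}\frac{\nu(f)-\nu(\partial_bf)}{b}$ (with $\epsilon(c)=-\infty$ for constants $c$). A monic $Q\in K[x]$ is a key polynomial for $\nu$ if for every $f\in K[x]$, $\epsilon(f)\ge\epsilon(Q)$ implies $\deg f\ge\deg Q$. For a monic $Q$ of degree $n\ge1$, every $f\in K[x]$ has a unique $Q$-expansion $f=\sum_{i=0}^ra_iQ^i$ with $\deg a_i<n$, and the truncation is $\nu_Q(f)=\min_i\nu(a_iQ^i)$. *)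

theory Defs
  imports "HOL-Computational_Algebra.Polynomial" "HOL-Library.Extended_Real"
begin

definition rank_one_valuation :: "('a::field poly \<Rightarrow> ereal) \<Rightarrow> bool" where
  "rank_one_valuation \<nu> \<longleftrightarrow>
     (\<forall>f. \<nu> f \<noteq> -\<infinity>) \<and>
     (\<forall>f. \<nu> f = \<infinity> \<longleftrightarrow> f = 0) \<and>
     (\<forall>f g. \<nu> (f * g) = \<nu> f + \<nu> g) \<and>
     (\<forall>f g. min (\<nu> f) (\<nu> g) \<le> \<nu> (f + g))"

text \<open>Hasse derivatives: hasse b f is the coefficient of y^b in f(x+y),
  computed in (K[x])[y].\<close>
definition hasse :: "nat \<Rightarrow> 'a::comm_ring_1 poly \<Rightarrow> 'a poly" where
  "hasse b f = coeff (pcompose (map_poly (\<lambda>c. [:c:]) f) [:[:0, 1:], 1:]) b"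

definition eps :: "('a::field poly \<Rightarrow> ereal) \<Rightarrow> 'a poly \<Rightarrow> ereal" where
  "eps \<nu> f = (if degree f = 0 then -\<infinity>
     else Max ((\<lambda>b. (\<nu> f - \<nu> (hasse b f)) / ereal (real b)) ` {1..degree f}))"

definition key_poly :: "('a::field poly \<Rightarrow> ereal) \<Rightarrow> 'a poly \<Rightarrow> bool" where
  "key_poly \<nu> Q \<longleftrightarrow> lead_coeff Q = 1 \<and>
     (\<forall>f. eps \<nu> Q \<le> eps \<nu> f \<longrightarrow> degree Q \<le> degree f)"

text \<open>The i-th coefficient of the Q-expansion f = sum a_i Q^i, deg a_i < deg Q.\<close>
definition qexp_coeff :: "'a::field poly \<Rightarrow> 'a poly \<Rightarrow> nat \<Rightarrow> 'a poly" where
  "qexp_coeff Q f i = (f div Q ^ i) mod Q"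

definition trunc_val :: "('a::field poly \<Rightarrow> ereal) \<Rightarrow> 'a poly \<Rightarrow> 'a poly \<Rightarrow> ereal" where
  "trunc_val \<nu> Q f = Min ((\<lambda>i. \<nu> (qexp_coeff Q f i * Q ^ i)) ` {0..degree f})"

end

theory Submission
  imports Defs
begin

text \<open>For a real weight $\delta$ let $\nu_\delta(h) = \min_b (\nu(\partial_b h) + b\delta)$, the Gauss
  valuation of $h(x + y) \in K[x][y]$ with $y$ of weight $\delta$. By Gauss's lemma $\nu_\delta$ is again a
  valuation; $\nu_\delta \le \nu$ with equality once $\epsilon(h) \le \delta$, and for $\delta \le \epsilon(Q)$
  the value $\nu_\delta(Q)$ grows with slope at least $1$. As $qQ = f - r$ and $\epsilon(f), \epsilon(r) \le \gamma$,
  this gives $\min(\nu f, \nu r) + (\delta - \gamma) \le \nu_\delta(qQ)$ for $\gamma \le \delta \le \epsilon(Q)$;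
  at $\delta = \epsilon(Q)$ this exceeds $\nu(qQ)$ unless $\nu f = \nu r$.
  Since $Q$ is a key polynomial, the coefficients $a_i$ of the $Q$-expansion of $qQ$ satisfy
  $\epsilon(a_i) < \epsilon(Q)$, so $\nu_\delta(a_i Q^i) = \nu(a_i Q^i) - i(\nu(Q) - \nu_\delta(Q))$ for $\delta$
  close to $\epsilon(Q)$. Then a single term of least $\nu$-value dominates the expansion, whence
  $\nu_\delta(qQ) \le \nu_Q(qQ)$, and letting $\delta \to \epsilon(Q)$ gives the bound.\<close>

definition taylor_poly :: "'a::comm_ring_1 poly \<Rightarrow> 'a poly poly" where
  "taylor_poly h = pcompose (map_poly (\<lambda>c. [:c:]) h) [:[:0, 1:], 1:]"

lemma hasse_eq_coeff_taylor_poly: "hasse b h = coeff (taylor_poly h) b"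
  by (simp add: hasse_def taylor_poly_def)

lemma const_poly_sum: "[:sum f A:] = (\<Sum>a\<in>A. [:f a:])"
proof (induction A rule: infinite_finite_induct)
  case (insert x F)
  have "[:f x + sum f F:] = [:f x:] + [:sum f F:]"
    by (metis add_pCons add_0)
  with insert show ?case by simp
qed auto

lemma map_poly_const_poly_mult:
  "map_poly (\<lambda>c. [:c:]) (p * q) = map_poly (\<lambda>c. [:c::'a::comm_ring_1:]) p * map_poly (\<lambda>c. [:c:]) q"
  by (intro poly_eqI) (simp add: coeff_map_poly coeff_mult const_poly_sum mult_to_poly mult.commute)

lemma map_poly_const_poly_add:
  "map_poly (\<lambda>c. [:c:]) (p + q) = map_poly (\<lambda>c. [:c::'a::comm_ring_1:]) p + map_poly (\<lambda>c. [:c:]) q"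
  by (intro poly_eqI) (simp add: coeff_map_poly)

lemma taylor_poly_mult: "taylor_poly (p * q) = taylor_poly p * taylor_poly q"
  by (simp add: taylor_poly_def map_poly_const_poly_mult pcompose_mult)

lemma taylor_poly_add: "taylor_poly (p + q) = taylor_poly p + taylor_poly q"
  by (simp add: taylor_poly_def map_poly_const_poly_add pcompose_add)

lemma coeff_taylor_poly_0 [simp]: "coeff (taylor_poly h) 0 = h"
proof -
  have "poly (map_poly (\<lambda>c. [:c:]) h) [:0, 1:] = h"
    by (induction h) (auto simp: map_poly_pCons)
  then show ?thesis by (simp add: taylor_poly_def)
qed

lemma taylor_poly_0 [simp]: "taylor_poly 0 = 0"
  by (simp add: taylor_poly_def)

lemma taylor_poly_eq_0_iff [simp]: "taylor_poly h = 0 \<longleftrightarrow> h = 0"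
  by (metis coeff_taylor_poly_0 coeff_0 taylor_poly_0)

lemma degree_taylor_poly: "degree (taylor_poly (h::'a::idom poly)) = degree h"
  by (simp add: taylor_poly_def degree_pcompose degree_map_poly)

lemma coeff_taylor_poly_degree: "coeff (taylor_poly (h::'a::idom poly)) (degree h) = [:lead_coeff h:]"
proof -
  have "lead_coeff (taylor_poly h)
      = lead_coeff (map_poly (\<lambda>c. [:c:]) h) * lead_coeff [:[:0, 1:], 1:] ^ degree (map_poly (\<lambda>c. [:c:]) h)"
    unfolding taylor_poly_def by (rule lead_coeff_comp) simp
  then show ?thesis by (simp add: degree_taylor_poly coeff_map_poly degree_map_poly)
qed

lemma coeff_taylor_poly_eq_0: "degree (h::'a::idom poly) < b \<Longrightarrow> coeff (taylor_poly h) b = 0"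
  by (simp add: coeff_eq_0 degree_taylor_poly)

lemma qexp_expansion_remainder:
  fixes Q g :: "'a::field poly"
  shows "g = (\<Sum>i<N. qexp_coeff Q g i * Q ^ i) + (g div Q ^ N) * Q ^ N"
proof (induction N)
  case (Suc N)
  have "g div Q ^ N = (g div Q ^ N) mod Q + ((g div Q ^ N) div Q) * Q"
    by simp
  also have "(g div Q ^ N) div Q = g div Q ^ Suc N"
    by (simp only: poly_div_mult_right[symmetric] power_Suc2)
  finally have "g div Q ^ N = qexp_coeff Q g N + g div Q ^ Suc N * Q"
    by (simp add: qexp_coeff_def)
  with Suc show ?case
    by (simp add: algebra_simps power_Suc2)
qed simp

lemma qexp_expansion:
  fixes Q g :: "'a::field poly"
  assumes "degree Q > 0"
  shows "g = (\<Sum>i\<in>{0..degree g}. qexp_coeff Q g i * Q ^ i)"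
proof -
  have "degree g < Suc (degree g) * degree Q"
    using assms mult_le_mono2[of 1 "degree Q" "Suc (degree g)"] by simp
  also have "\<dots> = degree (Q ^ Suc (degree g))"
    using assms by (subst degree_power_eq) auto
  finally have "g div Q ^ Suc (degree g) = 0"
    by (rule div_poly_less)
  moreover have "{..<Suc (degree g)} = {0..degree g}" by auto
  ultimately show ?thesis
    using qexp_expansion_remainder[of g Q "Suc (degree g)"] by simp
qed

lemma degree_qexp_coeff_less:
  fixes Q g :: "'a::field poly"
  assumes "degree Q > 0"
  shows "degree (qexp_coeff Q g i) < degree Q"
proof -
  have "Q \<noteq> 0" using assms by auto
  then show ?thesis
    using assms degree_mod_less[of Q "g div Q ^ i"] by (auto simp: qexp_coeff_def)
qed

lemma ereal_add_less_le_mono: "ereal a < x \<Longrightarrow> ereal b \<le> y \<Longrightarrow> ereal (a + b) < x + y"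
  by (cases x; cases y) auto

lemma ereal_diff_div_le_iff:
  assumes "y \<noteq> -\<infinity>" "b > 0"
  shows "(ereal x - y) / ereal b \<le> ereal d \<longleftrightarrow> ereal x \<le> y + ereal (b * d)"
  using assms by (cases y) (auto simp: divide_le_eq mult.commute)

lemma ereal_le_diff_div_iff:
  assumes "y \<noteq> -\<infinity>" "b > 0"
  shows "ereal d \<le> (ereal x - y) / ereal b \<longleftrightarrow> y + ereal (b * d) \<le> ereal x"
  using assms by (cases y) (auto simp: le_divide_eq mult.commute)

lemma ereal_le_of_eventually_at_left:
  assumes "\<forall>\<^sub>F \<delta> in at_left \<epsilon>. ereal (c + \<delta>) \<le> z"
  shows "ereal (c + \<epsilon>) \<le> z"
  by (rule tendsto_le[OF trivial_limit_at_left_real tendsto_const _ assms]) (intro tendsto_intros)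

lemma obtain_last_argmin:
  fixes f :: "nat \<Rightarrow> 'b::linorder"
  obtains k where "k \<le> J" "f k = Min (f ` {..J})"
    and "\<And>i. i \<le> J \<Longrightarrow> f i = Min (f ` {..J}) \<Longrightarrow> i \<le> k"
proof -
  define K where "K = {i. i \<le> J \<and> f i = Min (f ` {..J})}"
  have "Min (f ` {..J}) \<in> f ` {..J}" by (intro Min_in) auto
  then obtain i where "i \<le> J" "f i = Min (f ` {..J})" by (metis atMost_iff imageE)
  then have "K \<noteq> {}" "finite K" by (auto simp: K_def)
  then show ?thesis
    using that[of "Max K"] Max_in[of K] Max_ge[of K] by (auto simp: K_def)
qed

lemma ultrametric_sum_ge:
  fixes v :: "'b::comm_monoid_add \<Rightarrow> 'c::linorder"
  assumes "\<And>x y. min (v x) (v y) \<le> v (x + y)" and "c \<le> v 0"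
    and "\<And>i. i \<in> S \<Longrightarrow> c \<le> v (F i)"
  shows "c \<le> v (sum F S)"
  using assms(3)
proof (induction S rule: infinite_finite_induct)
  case (insert x S)
  then have "c \<le> min (v (F x)) (v (sum F S))" by simp
  also have "\<dots> \<le> v (F x + sum F S)" by (rule assms(1))
  finally show ?case using insert by simp
qed (use assms(2) in auto)

lemma ultrametric_sum_gt:
  fixes v :: "'b::comm_monoid_add \<Rightarrow> 'c::linorder"
  assumes "\<And>x y. min (v x) (v y) \<le> v (x + y)" and "c < v 0"
    and "\<And>i. i \<in> S \<Longrightarrow> c < v (F i)"
  shows "c < v (sum F S)"
  using assms(3)
proof (induction S rule: infinite_finite_induct)
  case (insert x S)
  then have "c < min (v (F x)) (v (sum F S))" by simp
  also have "\<dots> \<le> v (F x + sum F S)" by (rule assms(1))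
  finally show ?case using insert by simp
qed (use assms(2) in auto)

locale rank_one_val =
  fixes v :: "'a::field poly \<Rightarrow> ereal"
  assumes rank_one_valuation: "rank_one_valuation v"
begin

lemma val_neq_MInf [simp]: "v f \<noteq> -\<infinity>"
  using rank_one_valuation by (simp add: rank_one_valuation_def)

lemma val_eq_PInf_iff [simp]: "v f = \<infinity> \<longleftrightarrow> f = 0"
  using rank_one_valuation by (simp add: rank_one_valuation_def)

lemma val_mult: "v (f * g) = v f + v g"
  using rank_one_valuation by (simp add: rank_one_valuation_def)

lemma val_add_ge: "min (v f) (v g) \<le> v (f + g)"
  using rank_one_valuation by (simp add: rank_one_valuation_def)

lemma val_0 [simp]: "v 0 = \<infinity>"
  by simp

lemma val_real: "f \<noteq> 0 \<Longrightarrow> \<exists>x. v f = ereal x"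
  by (cases "v f") auto

lemma val_unit:
  assumes "u * u = 1" shows "v u = 0"
proof -
  have "u \<noteq> 0" using assms by auto
  then obtain x where x: "v u = ereal x" using val_real by blast
  have "v 1 = v u + v u" using val_mult[of u u] assms by simp
  moreover have "v 1 = v 1 + v 1" using val_mult[of 1 1] by simp
  ultimately show ?thesis using x val_real[of 1] by (auto simp: zero_ereal_def)
qed

lemma val_1 [simp]: "v 1 = 0"
  by (rule val_unit) simp

lemma val_uminus [simp]: "v (- f) = v f"
  using val_mult[of "-1" f] val_unit[of "-1"] by simp

lemma val_diff_ge: "min (v f) (v g) \<le> v (f - g)"
  using val_add_ge[of f "- g"] by simp

lemma val_add_eq_left:
  assumes "v f < v g" shows "v (f + g) = v f"
proof (rule antisym)
  have "min (v (f + g)) (v g) \<le> v f"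
    using val_diff_ge[of "f + g" g] by simp
  then show "v (f + g) \<le> v f"
    using assms by (auto simp: min_def split: if_splits)
  show "v f \<le> v (f + g)"
    using val_add_ge[of f g] assms by simp
qed

lemma val_diff_eq_min:
  assumes "v f \<noteq> v g" shows "v (f - g) = min (v f) (v g)"
proof (cases "v f < v g")
  case True
  then show ?thesis using val_add_eq_left[of f "- g"] by simp
next
  case False
  then have "v (- g) < v f" using assms by simp
  then show ?thesis using val_add_eq_left[of "- g" f] False by (simp add: min_def)
qed

lemma val_eq_of_min_add_le:
  assumes "min (v f) (v g) + ereal e \<le> v (f - g)" "0 < e"
  shows "v f = v g"
proof (rule ccontr)
  assume ne: "v f \<noteq> v g"
  then have "min (v f) (v g) \<noteq> \<infinity>" by (auto simp: min_def)
  then obtain z where "min (v f) (v g) = ereal z"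
    by (cases "min (v f) (v g)") (auto simp: min_def split: if_splits)
  with assms val_diff_eq_min[OF ne] show False by simp
qed

lemma val_power:
  assumes "v f = ereal x" shows "v (f ^ j) = ereal (real j * x)"
  by (induction j) (simp_all add: val_mult assms algebra_simps zero_ereal_def)

lemma val_sum_eq_dominant:
  assumes "finite S" "k \<in> S" and "\<And>i. i \<in> S - {k} \<Longrightarrow> v (F k) < v (F i)"
  shows "v (sum F S) = v (F k)"
proof (cases "F k = 0")
  case True
  then have "S - {k} = {}" using assms(3) by fastforce
  then show ?thesis by (simp only: sum.remove[OF assms(1,2)]) simp
next
  case False
  then have "v (F k) < v (sum F (S - {k}))"
    by (intro ultrametric_sum_gt[where v = v] val_add_ge assms(3)) simp_all
  then show ?thesis
    using assms(1,2) val_add_eq_left by (simp add: sum.remove)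
qed

end

definition gauss_val :: "('a::field poly \<Rightarrow> ereal) \<Rightarrow> real \<Rightarrow> 'a poly poly \<Rightarrow> ereal" where
  "gauss_val v \<delta> H = (INF b. v (coeff H b) + ereal (real b * \<delta>))"

context rank_one_val
begin

lemma val_shift_add_ge: "min (v f + ereal e) (v g + ereal e) \<le> v (f + g) + ereal e"
proof -
  have "min (v f + ereal e) (v g + ereal e) = min (v f) (v g) + ereal e"
    by (cases "v f"; cases "v g") (auto simp: min_def)
  then show ?thesis using val_add_ge by (simp add: add_right_mono)
qed

lemma val_mult_shift:
  assumes "i \<le> n"
  shows "v (f * g) + ereal (real n * \<delta>) = (v f + ereal (real i * \<delta>)) + (v g + ereal (real (n - i) * \<delta>))"
proof -
  have "ereal (real n * \<delta>) = ereal (real i * \<delta>) + ereal (real (n - i) * \<delta>)"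
    using assms by (simp add: of_nat_diff left_diff_distrib)
  then show ?thesis by (simp only: val_mult add_ac)
qed

lemma gauss_val_le: "gauss_val v \<delta> H \<le> v (coeff H b) + ereal (real b * \<delta>)"
  unfolding gauss_val_def by (rule INF_lower) simp

lemma gauss_val_greatest:
  "(\<And>b. c \<le> v (coeff H b) + ereal (real b * \<delta>)) \<Longrightarrow> c \<le> gauss_val v \<delta> H"
  unfolding gauss_val_def by (rule INF_greatest)

lemma gauss_val_0 [simp]: "gauss_val v \<delta> 0 = \<infinity>"
  by (simp add: gauss_val_def)

lemma gauss_val_attained:
  assumes "H \<noteq> 0"
  shows "\<exists>b. coeff H b \<noteq> 0 \<and> gauss_val v \<delta> H = v (coeff H b) + ereal (real b * \<delta>)"
proof -
  let ?t = "\<lambda>b. v (coeff H b) + ereal (real b * \<delta>)"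
  obtain b where b: "b \<le> degree H" "?t b = Min (?t ` {..degree H})"
    using Min_in[of "?t ` {..degree H}"] by fastforce
  have least: "?t b \<le> ?t c" for c
    by (cases "c \<le> degree H") (auto simp: b(2) coeff_eq_0)
  then have "gauss_val v \<delta> H = ?t b"
    by (intro antisym gauss_val_le gauss_val_greatest)
  moreover have "?t b < \<infinity>"
  proof -
    obtain x where "v (lead_coeff H) = ereal x" using val_real[of "lead_coeff H"] assms by auto
    then show ?thesis using least[of "degree H"] by auto
  qed
  ultimately show ?thesis by auto
qed

lemma gauss_val_attained_least:
  assumes "H \<noteq> 0"
  obtains b where "gauss_val v \<delta> H = v (coeff H b) + ereal (real b * \<delta>)"
    and "\<And>i. i < b \<Longrightarrow> gauss_val v \<delta> H < v (coeff H i) + ereal (real i * \<delta>)"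
proof -
  let ?P = "\<lambda>b. gauss_val v \<delta> H = v (coeff H b) + ereal (real b * \<delta>)"
  have "?P (LEAST b. ?P b)"
    using gauss_val_attained[OF assms] by (metis (mono_tags, lifting) LeastI)
  moreover have "gauss_val v \<delta> H < v (coeff H i) + ereal (real i * \<delta>)" if "i < (LEAST b. ?P b)" for i
    using not_less_Least[OF that] gauss_val_le[of \<delta> H i] by (simp add: order_less_le)
  ultimately show ?thesis using that by blast
qed

lemma gauss_val_real: "H \<noteq> 0 \<Longrightarrow> \<exists>x. gauss_val v \<delta> H = ereal x"
  using gauss_val_attained[of H \<delta>] val_real by fastforce

lemma gauss_val_add_ge: "min (gauss_val v \<delta> H) (gauss_val v \<delta> K) \<le> gauss_val v \<delta> (H + K)"
proof (rule gauss_val_greatest)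
  fix b
  have "min (gauss_val v \<delta> H) (gauss_val v \<delta> K)
      \<le> min (v (coeff H b) + ereal (real b * \<delta>)) (v (coeff K b) + ereal (real b * \<delta>))"
    by (intro min.mono gauss_val_le)
  also have "\<dots> \<le> v (coeff (H + K) b) + ereal (real b * \<delta>)"
    using val_shift_add_ge by simp
  finally show "min (gauss_val v \<delta> H) (gauss_val v \<delta> K) \<le> v (coeff (H + K) b) + ereal (real b * \<delta>)" .
qed

lemma gauss_val_mult_ge: "gauss_val v \<delta> H + gauss_val v \<delta> K \<le> gauss_val v \<delta> (H * K)"
proof (rule gauss_val_greatest)
  fix n
  show "gauss_val v \<delta> H + gauss_val v \<delta> K \<le> v (coeff (H * K) n) + ereal (real n * \<delta>)"
    unfolding coeff_mult
  proof (rule ultrametric_sum_ge[where v = "\<lambda>x. v x + ereal (real n * \<delta>)"])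
    fix i assume "i \<in> {..n}"
    then have "v (coeff H i * coeff K (n - i)) + ereal (real n * \<delta>)
        = (v (coeff H i) + ereal (real i * \<delta>)) + (v (coeff K (n - i)) + ereal (real (n - i) * \<delta>))"
      by (intro val_mult_shift) simp
    then show "gauss_val v \<delta> H + gauss_val v \<delta> K \<le> v (coeff H i * coeff K (n - i)) + ereal (real n * \<delta>)"
      by (simp only:) (intro add_mono gauss_val_le)
  qed (simp_all add: val_shift_add_ge)
qed

text \<open>Gauss's lemma: the product of the coefficients at the least indices where the two minima are
  attained is the unique term of least weighted value in its coefficient of the product.\<close>
lemma gauss_val_mult_le:
  assumes "H \<noteq> 0" "K \<noteq> 0"
  shows "gauss_val v \<delta> (H * K) \<le> gauss_val v \<delta> H + gauss_val v \<delta> K"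
proof -
  obtain b1 where b1: "gauss_val v \<delta> H = v (coeff H b1) + ereal (real b1 * \<delta>)"
    and below1: "\<And>i. i < b1 \<Longrightarrow> gauss_val v \<delta> H < v (coeff H i) + ereal (real i * \<delta>)"
    using gauss_val_attained_least[OF assms(1), where \<delta> = \<delta>] by blast
  obtain b2 where b2: "gauss_val v \<delta> K = v (coeff K b2) + ereal (real b2 * \<delta>)"
    and below2: "\<And>i. i < b2 \<Longrightarrow> gauss_val v \<delta> K < v (coeff K i) + ereal (real i * \<delta>)"
    using gauss_val_attained_least[OF assms(2), where \<delta> = \<delta>] by blast
  obtain w1 w2 where w: "gauss_val v \<delta> H = ereal w1" "gauss_val v \<delta> K = ereal w2"
    using gauss_val_real assms by blast
  define n where "n = b1 + b2"
  define rest where "rest = (\<Sum>i\<in>{..n} - {b1}. coeff H i * coeff K (n - i))"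
  have "v (coeff H b1 * coeff K b2) + ereal (real n * \<delta>) = gauss_val v \<delta> H + gauss_val v \<delta> K"
    unfolding b1 b2 n_def using val_mult_shift[of b1 "b1 + b2"] by simp
  then have lead: "v (coeff H b1 * coeff K b2) + ereal (real n * \<delta>) = ereal (w1 + w2)"
    using w by simp
  have "ereal (w1 + w2) < v rest + ereal (real n * \<delta>)"
    unfolding rest_def
  proof (rule ultrametric_sum_gt[where v = "\<lambda>x. v x + ereal (real n * \<delta>)"])
    fix i assume i: "i \<in> {..n} - {b1}"
    have split: "v (coeff H i * coeff K (n - i)) + ereal (real n * \<delta>)
        = (v (coeff H i) + ereal (real i * \<delta>)) + (v (coeff K (n - i)) + ereal (real (n - i) * \<delta>))"
      using i by (intro val_mult_shift) simp
    consider "i < b1" | "n - i < b2" using i by (fastforce simp: n_def)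
    then show "ereal (w1 + w2) < v (coeff H i * coeff K (n - i)) + ereal (real n * \<delta>)"
    proof cases
      case 1
      show ?thesis unfolding split
        by (intro ereal_add_less_le_mono) (use below1[OF 1] gauss_val_le[of \<delta> K] w in simp_all)
    next
      case 2
      have "ereal (w2 + w1) < (v (coeff K (n - i)) + ereal (real (n - i) * \<delta>)) + (v (coeff H i) + ereal (real i * \<delta>))"
        by (intro ereal_add_less_le_mono) (use below2[OF 2] gauss_val_le[of \<delta> H] w in simp_all)
      then show ?thesis unfolding split by (simp add: ac_simps)
    qed
  qed (simp_all add: val_shift_add_ge)
  then have "v (coeff H b1 * coeff K b2) < v rest"
    using lead by (cases "v rest"; cases "v (coeff H b1 * coeff K b2)") auto
  moreover have "coeff (H * K) n = coeff H b1 * coeff K b2 + rest"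
    unfolding coeff_mult rest_def by (subst sum.remove[of _ b1]) (auto simp: n_def)
  ultimately have "v (coeff (H * K) n) + ereal (real n * \<delta>) = ereal (w1 + w2)"
    using lead val_add_eq_left by simp
  then show ?thesis
    using gauss_val_le[of \<delta> "H * K" n] w by simp
qed

lemma gauss_val_mult: "gauss_val v \<delta> (H * K) = gauss_val v \<delta> H + gauss_val v \<delta> K"
proof (cases "H = 0 \<or> K = 0")
  case True
  then show ?thesis using gauss_val_real[of _ \<delta>] by auto
next
  case False
  then show ?thesis by (intro antisym gauss_val_mult_le gauss_val_mult_ge) auto
qed

end

definition taylor_val :: "('a::field poly \<Rightarrow> ereal) \<Rightarrow> real \<Rightarrow> 'a poly \<Rightarrow> ereal" where
  "taylor_val v \<delta> h = gauss_val v \<delta> (taylor_poly h)"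

context rank_one_val
begin

lemma taylor_val_real: "h \<noteq> 0 \<Longrightarrow> \<exists>x. taylor_val v \<delta> h = ereal x"
  unfolding taylor_val_def by (intro gauss_val_real) simp

lemma rank_one_valuation_taylor_val: "rank_one_valuation (taylor_val v \<delta>)"
proof -
  have "taylor_val v \<delta> h \<noteq> -\<infinity> \<and> (taylor_val v \<delta> h = \<infinity> \<longleftrightarrow> h = 0)" for h
    using taylor_val_real[of h \<delta>] by (cases "h = 0") (auto simp: taylor_val_def)
  then show ?thesis
    unfolding rank_one_valuation_def
    by (simp add: taylor_val_def taylor_poly_mult gauss_val_mult taylor_poly_add gauss_val_add_ge)
qed

lemma taylor_val_le_val: "taylor_val v \<delta> h \<le> v h"
  using gauss_val_le[of \<delta> "taylor_poly h" 0] by (simp add: taylor_val_def)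

lemma taylor_val_mono:
  assumes "\<delta> \<le> \<delta>'" shows "taylor_val v \<delta> h \<le> taylor_val v \<delta>' h"
  unfolding taylor_val_def
proof (rule gauss_val_greatest)
  fix b
  have "gauss_val v \<delta> (taylor_poly h) \<le> v (coeff (taylor_poly h) b) + ereal (real b * \<delta>)"
    by (rule gauss_val_le)
  also have "\<dots> \<le> v (coeff (taylor_poly h) b) + ereal (real b * \<delta>')"
    using assms by (intro add_left_mono) (simp add: mult_left_mono)
  finally show "gauss_val v \<delta> (taylor_poly h) \<le> v (coeff (taylor_poly h) b) + ereal (real b * \<delta>')" .
qed

lemma eps_ge:
  assumes "b \<in> {1..degree h}"
  shows "(v h - v (hasse b h)) / ereal (real b) \<le> eps v h"
  using assms by (auto simp: eps_def)

lemma eps_attained: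
  assumes "degree h > 0"
  obtains b where "b \<in> {1..degree h}" "eps v h = (v h - v (hasse b h)) / ereal (real b)"
proof -
  have "eps v h \<in> (\<lambda>b. (v h - v (hasse b h)) / ereal (real b)) ` {1..degree h}"
    unfolding eps_def using assms by (simp del: Max_in) (intro Max_in; simp)
  then show ?thesis using that by blast
qed

lemma eps_real:
  assumes "degree h > 0" shows "\<exists>e. eps v h = ereal e"
proof -
  have h: "h \<noteq> 0" using assms by auto
  obtain x where x: "v h = ereal x" using val_real[OF h] by blast
  obtain y where y: "v (hasse (degree h) h) = ereal y"
    using val_real[of "hasse (degree h) h"] h
    by (auto simp: hasse_eq_coeff_taylor_poly coeff_taylor_poly_degree)
  have "ereal ((x - y) / real (degree h)) \<le> eps v h"
    using eps_ge[of "degree h" h] assms x y by simp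
  moreover obtain b where "b \<in> {1..degree h}" "eps v h = (v h - v (hasse b h)) / ereal (real b)"
    using eps_attained[OF assms] by blast
  then have "eps v h \<noteq> \<infinity>"
    using x by (cases "v (hasse b h)") auto
  ultimately show ?thesis by (cases "eps v h") auto
qed

lemma val_le_taylor_coeff:
  assumes "eps v h \<le> ereal \<delta>"
  shows "v h \<le> v (coeff (taylor_poly h) b) + ereal (real b * \<delta>)"
proof (cases "b = 0 \<or> degree h < b")
  case True
  then show ?thesis by (auto simp: coeff_taylor_poly_eq_0)
next
  case False
  then have b: "b \<in> {1..degree h}" by auto
  then have "h \<noteq> 0" by auto
  then obtain x where "v h = ereal x" using val_real by blast
  then show ?thesis
    using order_trans[OF eps_ge[OF b] assms] b
    by (simp add: ereal_diff_div_le_iff hasse_eq_coeff_taylor_poly)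
qed

lemma taylor_val_eq_val:
  assumes "eps v h \<le> ereal \<delta>" shows "taylor_val v \<delta> h = v h"
proof (rule antisym[OF taylor_val_le_val])
  show "v h \<le> taylor_val v \<delta> h"
    unfolding taylor_val_def using assms by (intro gauss_val_greatest val_le_taylor_coeff)
qed

lemma eps_attained_taylor_coeff:
  assumes "degree h > 0" "eps v h = ereal \<epsilon>"
  obtains b where "b \<in> {1..degree h}" "v (coeff (taylor_poly h) b) + ereal (real b * \<epsilon>) = v h"
proof -
  obtain b where b: "b \<in> {1..degree h}" "eps v h = (v h - v (hasse b h)) / ereal (real b)"
    using eps_attained[OF assms(1)] by blast
  have "h \<noteq> 0" using assms(1) by auto
  then obtain x where x: "v h = ereal x" using val_real by blast
  have "ereal \<epsilon> \<le> (ereal x - v (hasse b h)) / ereal (real b)"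
    using b(2) assms(2) x by simp
  then have "v (coeff (taylor_poly h) b) + ereal (real b * \<epsilon>) \<le> v h"
    using b(1) x by (simp add: ereal_le_diff_div_iff hasse_eq_coeff_taylor_poly)
  with val_le_taylor_coeff[of h \<epsilon> b] assms(2) show ?thesis
    by (intro that[OF b(1)] antisym) simp_all
qed

lemma taylor_val_le_val_minus_gap:
  assumes "degree h > 0" "eps v h = ereal \<epsilon>" "v h = ereal x" "\<delta> \<le> \<epsilon>"
  shows "taylor_val v \<delta> h \<le> ereal (x - (\<epsilon> - \<delta>))"
proof -
  obtain b where b: "b \<in> {1..degree h}" "v (coeff (taylor_poly h) b) + ereal (real b * \<epsilon>) = v h"
    using eps_attained_taylor_coeff[OF assms(1,2)] by blast
  then have cb: "v (coeff (taylor_poly h) b) = ereal (x - real b * \<epsilon>)"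
    using assms(3) by (cases "v (coeff (taylor_poly h) b)") auto
  have "taylor_val v \<delta> h \<le> v (coeff (taylor_poly h) b) + ereal (real b * \<delta>)"
    unfolding taylor_val_def by (rule gauss_val_le)
  also have "\<dots> = ereal (x - real b * (\<epsilon> - \<delta>))"
    by (simp add: cb algebra_simps)
  also have "\<dots> \<le> ereal (x - (\<epsilon> - \<delta>))"
    using b(1) assms(4) mult_right_mono[of 1 "real b" "\<epsilon> - \<delta>"] by simp
  finally show ?thesis .
qed

lemma val_minus_gap_le_taylor_val:
  assumes "eps v h = ereal \<epsilon>" "v h = ereal x" "\<delta> \<le> \<epsilon>"
  shows "ereal (x - real (degree h) * (\<epsilon> - \<delta>)) \<le> taylor_val v \<delta> h"
  unfolding taylor_val_def
proof (rule gauss_val_greatest)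
  fix b
  show "ereal (x - real (degree h) * (\<epsilon> - \<delta>)) \<le> v (coeff (taylor_poly h) b) + ereal (real b * \<delta>)"
  proof (cases "degree h < b")
    case False
    then have "real b * (\<epsilon> - \<delta>) \<le> real (degree h) * (\<epsilon> - \<delta>)"
      using assms(3) by (intro mult_right_mono) auto
    moreover have "ereal x \<le> v (coeff (taylor_poly h) b) + ereal (real b * \<epsilon>)"
      using val_le_taylor_coeff[of h \<epsilon> b] assms(1,2) by simp
    ultimately show ?thesis
      by (cases "v (coeff (taylor_poly h) b)") (auto simp: algebra_simps)
  qed (simp add: coeff_taylor_poly_eq_0)
qed

lemma taylor_val_drop_below_eps:
  assumes "degree h > 0" "eps v h = ereal \<epsilon>" "\<delta> < \<epsilon>"
  obtains x c where "v h = ereal x" "taylor_val v \<delta> h = ereal (x - c)"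
    and "0 < c" "c \<le> real (degree h) * (\<epsilon> - \<delta>)"
proof -
  have "h \<noteq> 0" using assms(1) by auto
  then obtain x y where x: "v h = ereal x" and y: "taylor_val v \<delta> h = ereal y"
    using val_real taylor_val_real by blast
  show ?thesis
  proof (rule that[OF x, of "x - y"])
    show "taylor_val v \<delta> h = ereal (x - (x - y))" using y by simp
    show "0 < x - y"
      using taylor_val_le_val_minus_gap[OF assms(1,2) x, of \<delta>] y assms(3) by simp
    show "x - y \<le> real (degree h) * (\<epsilon> - \<delta>)"
      using val_minus_gap_le_taylor_val[OF assms(2) x, of \<delta>] y assms(3) by simp
  qed
qed

text \<open>The constant Taylor coefficient drives the slope: at $\delta = \epsilon(h)$ it still
  exceeds the minimum by the full gap, while the other coefficients grow with the weight.\<close>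
lemma taylor_val_slope:
  assumes "degree h > 0" "eps v h = ereal \<epsilon>" "\<gamma> \<le> \<delta>" "\<delta> \<le> \<epsilon>"
  shows "taylor_val v \<gamma> h + ereal (\<delta> - \<gamma>) \<le> taylor_val v \<delta> h"
proof -
  have "h \<noteq> 0" using assms(1) by auto
  then obtain x where x: "v h = ereal x" using val_real by blast
  obtain t where t: "taylor_val v \<gamma> h = ereal t" using taylor_val_real \<open>h \<noteq> 0\<close> by blast
  have t_le: "t \<le> x - (\<epsilon> - \<gamma>)"
    using taylor_val_le_val_minus_gap[OF assms(1,2) x, of \<gamma>] assms(3,4) t by simp
  show ?thesis
    unfolding taylor_val_def[of v \<delta>]
  proof (rule gauss_val_greatest)
    fix b
    show "taylor_val v \<gamma> h + ereal (\<delta> - \<gamma>) \<le> v (coeff (taylor_poly h) b) + ereal (real b * \<delta>)"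
    proof (cases "b = 0")
      case True
      then show ?thesis using t t_le x assms(4) by simp
    next
      case False
      have "taylor_val v \<gamma> h \<le> v (coeff (taylor_poly h) b) + ereal (real b * \<gamma>)"
        unfolding taylor_val_def by (rule gauss_val_le)
      moreover have "\<delta> - \<gamma> \<le> real b * (\<delta> - \<gamma>)"
        using False assms(3) mult_right_mono[of 1 "real b" "\<delta> - \<gamma>"] by simp
      ultimately show ?thesis
        using t by (cases "v (coeff (taylor_poly h) b)") (auto simp: algebra_simps)
    qed
  qed
qed

lemma taylor_val_mult_slope:
  assumes "degree Q > 0" "eps v Q = ereal \<epsilon>" "\<gamma> \<le> \<delta>" "\<delta> \<le> \<epsilon>"
  shows "taylor_val v \<gamma> (q * Q) + ereal (\<delta> - \<gamma>) \<le> taylor_val v \<delta> (q * Q)"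
proof -
  interpret w\<gamma>: rank_one_val "taylor_val v \<gamma>"
    by (rule rank_one_val.intro[OF rank_one_valuation_taylor_val])
  interpret w\<delta>: rank_one_val "taylor_val v \<delta>"
    by (rule rank_one_val.intro[OF rank_one_valuation_taylor_val])
  have "taylor_val v \<gamma> (q * Q) + ereal (\<delta> - \<gamma>) = taylor_val v \<gamma> q + (taylor_val v \<gamma> Q + ereal (\<delta> - \<gamma>))"
    by (simp add: w\<gamma>.val_mult add.assoc)
  also have "\<dots> \<le> taylor_val v \<delta> q + taylor_val v \<delta> Q"
    using assms by (intro add_mono taylor_val_mono taylor_val_slope)
  also have "\<dots> = taylor_val v \<delta> (q * Q)"
    by (simp add: w\<delta>.val_mult)
  finally show ?thesis .
qed

lemma taylor_val_qexp_term:
  assumes "eps v a \<le> ereal \<delta>" "v Q = ereal x" "taylor_val v \<delta> Q = ereal y"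
  shows "taylor_val v \<delta> (a * Q ^ i) + ereal (real i * (x - y)) = v (a * Q ^ i)"
proof -
  interpret w: rank_one_val "taylor_val v \<delta>"
    by (rule rank_one_val.intro[OF rank_one_valuation_taylor_val])
  have "taylor_val v \<delta> (a * Q ^ i) = v a + ereal (real i * y)"
    using assms(1,3) by (simp add: w.val_mult w.val_power taylor_val_eq_val)
  moreover have "v (a * Q ^ i) = v a + ereal (real i * x)"
    using assms(2) by (simp add: val_mult val_power)
  ultimately show ?thesis
    by (cases "v a") (simp_all add: algebra_simps)
qed

lemma trunc_val_le: "i \<le> degree g \<Longrightarrow> trunc_val v Q g \<le> v (qexp_coeff Q g i * Q ^ i)"
  unfolding trunc_val_def by (intro Min_le) auto

lemma trunc_val_real:
  assumes "degree Q > 0" "g \<noteq> 0"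
  shows "\<exists>m. trunc_val v Q g = ereal m"
proof -
  have "trunc_val v Q g \<in> (\<lambda>i. v (qexp_coeff Q g i * Q ^ i)) ` {0..degree g}"
    unfolding trunc_val_def by (intro Min_in) auto
  then obtain i where "trunc_val v Q g = v (qexp_coeff Q g i * Q ^ i)" by blast
  then have "trunc_val v Q g \<noteq> -\<infinity>" by simp
  moreover have "trunc_val v Q g \<noteq> \<infinity>"
  proof
    assume "trunc_val v Q g = \<infinity>"
    then have "qexp_coeff Q g i * Q ^ i = 0" if "i \<in> {0..degree g}" for i
      using trunc_val_le[of i g Q] that by simp
    then have "(\<Sum>i\<in>{0..degree g}. qexp_coeff Q g i * Q ^ i) = 0"
      by (intro sum.neutral ballI)
    with qexp_expansion[OF assms(1), of g] assms(2) show False by argo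
  qed
  ultimately show ?thesis by (cases "trunc_val v Q g") auto
qed

text \<open>Here $\nu_\delta(a_i Q^i) = \nu(a_i Q^i) - i c$ with $0 < c \le \deg Q\,(\epsilon(Q) - \delta)$, so among the
  terms of least $\nu$-value the one of largest index strictly dominates under $\nu_\delta$.\<close>
lemma taylor_val_le_trunc_val:
  assumes dQ: "degree Q > 0" and eQ: "eps v Q = ereal \<epsilon>" and "\<delta> < \<epsilon>" "g \<noteq> 0"
    and eps_coeff: "\<And>i. i \<le> degree g \<Longrightarrow> eps v (qexp_coeff Q g i) \<le> ereal \<delta>"
    and gap: "\<And>i. i \<le> degree g \<Longrightarrow> trunc_val v Q g < v (qexp_coeff Q g i * Q ^ i) \<Longrightarrow>
      trunc_val v Q g + ereal (real (degree g) * real (degree Q) * (\<epsilon> - \<delta>)) < v (qexp_coeff Q g i * Q ^ i)"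
  shows "taylor_val v \<delta> g \<le> trunc_val v Q g"
proof -
  interpret w: rank_one_val "taylor_val v \<delta>"
    by (rule rank_one_val.intro[OF rank_one_valuation_taylor_val])
  define J where "J = degree g"
  define t where "t = (\<lambda>i. qexp_coeff Q g i * Q ^ i)"
  obtain m where m: "trunc_val v Q g = ereal m"
    using trunc_val_real[OF dQ \<open>g \<noteq> 0\<close>] by blast
  have "Min ((\<lambda>i. v (t i)) ` {..J}) = ereal m"
    using m by (simp add: trunc_val_def t_def J_def atLeast0AtMost)
  then obtain k where k: "k \<le> J" "v (t k) = ereal m"
    and k_max: "\<And>i. i \<le> J \<Longrightarrow> v (t i) = ereal m \<Longrightarrow> i \<le> k"
    using obtain_last_argmin[of J "\<lambda>i. v (t i)"] by metis
  obtain x c where vQ: "v Q = ereal x" and wQ: "taylor_val v \<delta> Q = ereal (x - c)"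
    and c: "0 < c" "c \<le> real (degree Q) * (\<epsilon> - \<delta>)"
    using taylor_val_drop_below_eps[OF dQ eQ \<open>\<delta> < \<epsilon>\<close>] by blast
  have term_val: "taylor_val v \<delta> (t i) + ereal (real i * c) = v (t i)" if "i \<le> J" for i
    using taylor_val_qexp_term[OF eps_coeff vQ wQ, of i i] that by (simp add: t_def J_def)
  have wk: "taylor_val v \<delta> (t k) = ereal (m - real k * c)"
    using term_val[OF k(1)] k(2) by (cases "taylor_val v \<delta> (t k)") auto
  have dominant: "taylor_val v \<delta> (t k) < taylor_val v \<delta> (t i)" if i: "i \<in> {0..J} - {k}" for i
  proof (cases "v (t i) = ereal m")
    case True
    then have "real i * c < real k * c" using k_max[of i] i c by fastforce
    then show ?thesis
      using term_val[of i] i True wk by (cases "taylor_val v \<delta> (t i)") auto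
  next
    case False
    then have "ereal (m + real J * real (degree Q) * (\<epsilon> - \<delta>)) < v (t i)"
      using gap[of i] trunc_val_le[of i g Q] i m by (simp add: t_def J_def)
    moreover have "real i * c \<le> real J * (real (degree Q) * (\<epsilon> - \<delta>))"
      using i c by (intro mult_mono) auto
    ultimately have "ereal (m + real i * c) < taylor_val v \<delta> (t i) + ereal (real i * c)"
      using term_val[of i] i by (auto simp: algebra_simps intro: le_less_trans[rotated])
    then have "ereal m < taylor_val v \<delta> (t i)"
      by (cases "taylor_val v \<delta> (t i)") auto
    then show ?thesis
      using wk c by (auto intro: le_less_trans[of _ "ereal m"])
  qed
  have g_sum: "g = sum t {0..J}"
    unfolding t_def J_def by (rule qexp_expansion[OF dQ])
  have "taylor_val v \<delta> g = taylor_val v \<delta> (t k)"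
    unfolding g_sum using k(1) dominant by (intro w.val_sum_eq_dominant) auto
  also have "\<dots> \<le> trunc_val v Q g"
    using wk m c by simp
  finally show ?thesis .
qed

lemma eventually_taylor_val_le_trunc_val:
  assumes key: "key_poly v Q" and eQ: "eps v Q = ereal \<epsilon>" and "g \<noteq> 0"
  shows "\<forall>\<^sub>F \<delta> in at_left \<epsilon>. taylor_val v \<delta> g \<le> trunc_val v Q g"
proof -
  have dQ: "degree Q > 0" using eQ by (cases "degree Q = 0") (auto simp: eps_def)
  obtain m where m: "trunc_val v Q g = ereal m"
    using trunc_val_real[OF dQ \<open>g \<noteq> 0\<close>] by blast
  define C where "C = real (degree g) * real (degree Q)"
  have "((\<lambda>\<delta>. ereal (m + C * (\<epsilon> - \<delta>))) \<longlongrightarrow> ereal (m + C * (\<epsilon> - \<epsilon>))) (at_left \<epsilon>)"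
    by (intro tendsto_intros)
  then have lim_gap: "((\<lambda>\<delta>. ereal (m + C * (\<epsilon> - \<delta>))) \<longlongrightarrow> ereal m) (at_left \<epsilon>)"
    by simp
  have lim_id: "((\<lambda>\<delta>. ereal \<delta>) \<longlongrightarrow> ereal \<epsilon>) (at_left \<epsilon>)"
    by (intro tendsto_intros)
  have "\<forall>\<^sub>F \<delta> in at_left \<epsilon>. \<delta> < \<epsilon>"
    using eventually_at_left_real[of "\<epsilon> - 1" \<epsilon>] by (auto elim: eventually_mono)
  moreover have "\<forall>\<^sub>F \<delta> in at_left \<epsilon>. \<forall>i\<in>{..degree g}. eps v (qexp_coeff Q g i) \<le> ereal \<delta>"
  proof (intro eventually_ball_finite ballI finite_atMost)
    fix i
    have "\<not> eps v Q \<le> eps v (qexp_coeff Q g i)"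
      using key degree_qexp_coeff_less[OF dQ, of g i] by (auto simp: key_poly_def)
    then have "eps v (qexp_coeff Q g i) < ereal \<epsilon>" using eQ by simp
    from order_tendstoD(1)[OF lim_id this]
    show "\<forall>\<^sub>F \<delta> in at_left \<epsilon>. eps v (qexp_coeff Q g i) \<le> ereal \<delta>"
      by (rule eventually_mono) simp
  qed
  moreover have "\<forall>\<^sub>F \<delta> in at_left \<epsilon>. \<forall>i\<in>{..degree g}. ereal m < v (qexp_coeff Q g i * Q ^ i) \<longrightarrow>
      ereal (m + C * (\<epsilon> - \<delta>)) < v (qexp_coeff Q g i * Q ^ i)"
  proof (intro eventually_ball_finite ballI finite_atMost)
    fix i
    show "\<forall>\<^sub>F \<delta> in at_left \<epsilon>. ereal m < v (qexp_coeff Q g i * Q ^ i) \<longrightarrow>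
        ereal (m + C * (\<epsilon> - \<delta>)) < v (qexp_coeff Q g i * Q ^ i)"
      using order_tendstoD(2)[OF lim_gap, of "v (qexp_coeff Q g i * Q ^ i)"]
      by (cases "ereal m < v (qexp_coeff Q g i * Q ^ i)") auto
  qed
  ultimately show ?thesis
  proof eventually_elim
    case (elim \<delta>)
    then show ?case
      using taylor_val_le_trunc_val[OF dQ eQ _ \<open>g \<noteq> 0\<close>, of \<delta>] by (simp add: m C_def)
  qed
qed

lemma min_val_add_le_taylor_val:
  assumes "degree Q > 0" "eps v Q = ereal \<epsilon>" "f = q * Q + r"
    and "eps v f \<le> ereal \<gamma>" "eps v r \<le> ereal \<gamma>" "\<gamma> \<le> \<delta>" "\<delta> \<le> \<epsilon>"
  shows "min (v f) (v r) + ereal (\<delta> - \<gamma>) \<le> taylor_val v \<delta> (q * Q)"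
proof -
  interpret w: rank_one_val "taylor_val v \<gamma>"
    by (rule rank_one_val.intro[OF rank_one_valuation_taylor_val])
  have "min (v f) (v r) = min (taylor_val v \<gamma> f) (taylor_val v \<gamma> r)"
    using assms(4,5) by (simp add: taylor_val_eq_val)
  also have "\<dots> \<le> taylor_val v \<gamma> (q * Q)"
    using w.val_diff_ge[of f r] assms(3) by simp
  finally have "min (v f) (v r) + ereal (\<delta> - \<gamma>) \<le> taylor_val v \<gamma> (q * Q) + ereal (\<delta> - \<gamma>)"
    by (rule add_right_mono)
  also have "\<dots> \<le> taylor_val v \<delta> (q * Q)"
    using assms(1,2,6,7) by (rule taylor_val_mult_slope)
  finally show ?thesis .
qed


lemma val_eq_and_gap_le_trunc_val:
  assumes key: "key_poly v Q" and eQ: "eps v Q = ereal \<epsilon>"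
    and fqr: "f = q * Q + r" and "q * Q \<noteq> 0"
    and eps_fr: "eps v f \<le> ereal \<gamma>" "eps v r \<le> ereal \<gamma>" and "\<gamma> < \<epsilon>"
  shows "v f = v r" and "v f + ereal (\<epsilon> - \<gamma>) \<le> trunc_val v Q (q * Q)"
proof -
  have dQ: "degree Q > 0" using eQ by (cases "degree Q = 0") (auto simp: eps_def)
  have shift: "min (v f) (v r) + ereal (\<delta> - \<gamma>) \<le> taylor_val v \<delta> (q * Q)" if "\<gamma> \<le> \<delta>" "\<delta> \<le> \<epsilon>" for \<delta>
    using min_val_add_le_taylor_val[OF dQ eQ fqr eps_fr that] .
  show vfr: "v f = v r"
    using shift[of \<epsilon>] \<open>\<gamma> < \<epsilon>\<close> taylor_val_le_val[of \<epsilon> "q * Q"] fqr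
    by (intro val_eq_of_min_add_le[of _ _ "\<epsilon> - \<gamma>"]) (auto intro: order_trans)
  have "f \<noteq> 0"
  proof
    assume "f = 0"
    then have "r = 0" using vfr by (metis val_0 val_eq_PInf_iff)
    with \<open>f = 0\<close> fqr \<open>q * Q \<noteq> 0\<close> show False by simp
  qed
  then obtain \<phi> where \<phi>: "v f = ereal \<phi>" using val_real by blast
  have "\<forall>\<^sub>F \<delta> in at_left \<epsilon>. ereal ((\<phi> - \<gamma>) + \<delta>) \<le> trunc_val v Q (q * Q)"
    using eventually_taylor_val_le_trunc_val[OF key eQ \<open>q * Q \<noteq> 0\<close>] eventually_at_left_real[OF \<open>\<gamma> < \<epsilon>\<close>]
  proof eventually_elim
    case (elim \<delta>)
    have "ereal ((\<phi> - \<gamma>) + \<delta>) = min (v f) (v r) + ereal (\<delta> - \<gamma>)"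
      using \<phi> vfr by simp
    also have "\<dots> \<le> taylor_val v \<delta> (q * Q)" using elim by (intro shift) auto
    finally show ?case using elim(1) by (rule order_trans)
  qed
  from ereal_le_of_eventually_at_left[OF this]
  show "v f + ereal (\<epsilon> - \<gamma>) \<le> trunc_val v Q (q * Q)"
    using \<phi> by (simp add: algebra_simps)
qed
end


theorem lemma2p1:
  fixes \<nu> :: "'a::field poly \<Rightarrow> ereal" and Q f q r :: "'a poly"
  assumes "rank_one_valuation \<nu>"
    and "key_poly \<nu> Q"
    and "f = q * Q + r"
    and "max (eps \<nu> f) (eps \<nu> r) < eps \<nu> Q"
  shows "\<nu> f + (eps \<nu> Q - max (eps \<nu> f) (eps \<nu> r)) \<le> trunc_val \<nu> Q (q * Q)
         \<and> \<nu> f = \<nu> r"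
proof -
  interpret rank_one_val \<nu> by (rule rank_one_val.intro) fact
  have dQ: "degree Q > 0" using assms(4) by (cases "degree Q = 0") (auto simp: eps_def)
  then obtain \<epsilon> where eQ: "eps \<nu> Q = ereal \<epsilon>" using eps_real by blast
  show ?thesis
  proof (cases "q = 0")
    case True
    then show ?thesis using assms(3) by (simp add: trunc_val_def qexp_coeff_def)
  next
    case False
    then have qQ: "q * Q \<noteq> 0" using dQ by auto
    with dQ assms(3) have "degree f > 0 \<or> degree r > 0"
      using degree_diff_le[of f 0 r] by (auto simp: degree_mult_eq)
    then have "max (eps \<nu> f) (eps \<nu> r) \<noteq> -\<infinity>"
      using eps_real[of f] eps_real[of r] by (auto simp: max_def)
    with assms(4) eQ obtain \<gamma> where \<gamma>: "max (eps \<nu> f) (eps \<nu> r) = ereal \<gamma>" "\<gamma> < \<epsilon>"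
      by (cases "max (eps \<nu> f) (eps \<nu> r)") auto
    then have "eps \<nu> f \<le> ereal \<gamma>" "eps \<nu> r \<le> ereal \<gamma>"
      by (metis max.cobounded1 max.cobounded2)+
    from val_eq_and_gap_le_trunc_val[OF assms(2) eQ assms(3) qQ this \<gamma>(2)]
    show ?thesis using eQ \<gamma>(1) by simp
  qed
qed

end
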